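(* Let $d\ge2$, $\gamma>0$, $z\in\mathbb C$ with $\Re z\ge0$, and $0\ne k\in\gamma\mathbb Z^d$. Then $$\Re(c_0(z,k))\le1-\phi_0(\gamma,d),\qquad |c_1(z,k)|\le\frac1{2\sqrt d}+\frac1\gamma,\qquad d\,|c_2(z,k)|\le1-\alpha_2(d,\varepsilon)\,\phi_2(\varepsilon\gamma)\quad\text{for all }0<\varepsilon<1,$$ where $\phi_0(\cdot,d):[0,\infty)\to[0,1)$ is a continuous nondecreasing function (depending only on $d$) with $\phi_0(0,d)=0$ and $\phi_0(\gamma,d)\to1$ as $\gamma\to\infty$, and $\phi_2(u)=1-(1+u^2)^{-1/2}$. Moreover, $\varepsilon\mapsto\alpha_2(d,\varepsilon)$ is continuous and strictly decreasing on $[0,1]$ with $\alpha_2(d,0)=1/2$ and $\alpha_2(d,1)=0$.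
   Context: $\mathbb S^{d-1}$ unit sphere with surface measure $d\omega$, $M_0=|\mathbb S^{d-1}|^{-1}$, $\gamma\mathbb Z^d=\{\gamma k':k'\in\mathbb Z^d\}$, $\omega_1$ the first coordinate of $\omega$. Define $$c_j(z,k)=\int_{\mathbb S^{d-1}}\frac{\omega_1^jM_0}{1+z+i|k|\omega_1}\,d\omega,\ j=0,1,2,\qquad \alpha_2(d,\varepsilon)=d\int_{\{\omega\in\mathbb S^{d-1}:\,\omega_1\ge\varepsilon\}}\omega_1^2M_0\,d\omega.$$ *)

theory Defs
  imports "HOL-Analysis.Analysis"
begin

text \<open>Average of a function over the unit sphere S^{d-1} in R^d with respect to the
  normalized surface measure M0 d omega.  Since the library has no surface measure on
  the sphere, we use the standard construction of the normalized surface measure as the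
  push-forward of the normalized Lebesgue measure on the unit ball under x |-> x/|x|.\<close>
definition sph_avg :: "(real^('n::finite) \<Rightarrow> 'b::{banach, second_countable_topology}) \<Rightarrow> 'b" where
  "sph_avg f = (1 / measure lebesgue (ball (0::real^'n) 1)) *\<^sub>R
      integral\<^sup>L (lebesgue_on (ball (0::real^'n) 1)) (\<lambda>x. f (x /\<^sub>R norm x))"

definition scaled_lattice :: "real \<Rightarrow> (real^('n::finite)) set" where
  "scaled_lattice \<gamma> = {k. \<forall>j. \<exists>m::int. k $ j = \<gamma> * of_int m}"

definition cj :: "'n::finite \<Rightarrow> nat \<Rightarrow> complex \<Rightarrow> real^'n \<Rightarrow> complex" where
  "cj i1 j z k = sph_avg (\<lambda>\<omega>::real^'n.
      complex_of_real ((\<omega> $ i1) ^ j) / (1 + z + \<i> * complex_of_real (norm k * (\<omega> $ i1))))"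

definition alpha2 :: "'n::finite \<Rightarrow> real \<Rightarrow> real" where
  "alpha2 i1 \<epsilon> = real CARD('n) *
      sph_avg (\<lambda>\<omega>::real^'n. if \<omega> $ i1 \<ge> \<epsilon> then (\<omega> $ i1)^2 else 0)"

definition phi2 :: "real \<Rightarrow> real" where
  "phi2 u = 1 - 1 / sqrt (1 + u^2)"

end

theory Submission
  imports Defs "HOL-Probability.Distribution_Functions"
begin

text \<open>
  The coefficients \<open>c\<^sub>j\<close> and \<open>\<alpha>\<^sub>2\<close> only depend on the law \<open>\<mu>\<close> of the coordinate \<open>\<omega>\<^sub>1\<close> under the
  normalized surface measure, the push-forward of the uniform distribution on the unit ball under
  \<open>x \<mapsto> x / \<bar>x\<bar>\<close>. Lebesgue measure is invariant under signed permutations of the coordinates, so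
  \<open>\<mu>\<close> is symmetric and the same for every coordinate, whence \<open>\<integral>x\<^sup>2 d\<mu> = 1/d\<close>; for \<open>d \<ge> 2\<close> the
  cones \<open>{x\<^sub>1 = t\<bar>x\<bar>}\<close> are Lebesgue null, so \<open>\<mu>\<close> has no atoms.

  For \<open>Re z \<ge> 0\<close> one of the two moduli \<open>\<bar>1 + z \<plusminus> i b x\<bar>\<close> is at least \<open>sqrt (1 + b\<^sup>2 x\<^sup>2)\<close>;
  pairing \<open>x\<close> with \<open>-x\<close> gives the bounds on \<open>c\<^sub>1\<close> and \<open>c\<^sub>2\<close>. Finally \<open>Re (1 / (1 + z + i b x))\<close>
  is at most \<open>1\<close>, and at most \<open>1 / (2 b \<delta>)\<close> unless \<open>x\<close> lies in an interval of length \<open>2 \<delta>\<close>.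
  Since \<open>\<mu>\<close> has no atoms, such intervals have uniformly small mass, so the supremum of \<open>Re c\<^sub>0\<close>
  over \<open>\<bar>k\<bar> \<ge> \<gamma>\<close> tends to \<open>0\<close>; \<open>\<phi>\<^sub>0\<close> is a continuous nondecreasing minorant of one minus
  this supremum.
\<close>

lemma integral_uniform_measure:
  fixes f :: "'a \<Rightarrow> 'b::{banach, second_countable_topology}"
  assumes A: "A \<in> sets M" "emeasure M A \<noteq> 0" "emeasure M A \<noteq> \<infinity>"
    and f: "f \<in> borel_measurable M"
  shows "integral\<^sup>L (uniform_measure M A) f
    = (1 / measure M A) *\<^sub>R integral\<^sup>L M (\<lambda>x. indicator A x *\<^sub>R f x)"
proof -
  have eq: "emeasure M A = ennreal (measure M A)"
    using A(3) by (simp add: emeasure_eq_ennreal_measure)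
  then have pos: "measure M A > 0"
    using A(2) by (simp add: zero_less_measure_iff)
  have "uniform_measure M A = density M (\<lambda>x. indicator A x / measure M A)"
  proof -
    have "indicator A x / ennreal (measure M A) = ennreal (indicator A x / measure M A)" for x
      by (cases "x \<in> A") (simp_all add: divide_ennreal[of 1, simplified] pos)
    then show ?thesis
      unfolding uniform_measure_def eq by simp
  qed
  then have "integral\<^sup>L (uniform_measure M A) f
      = integral\<^sup>L M (\<lambda>x. (indicator A x / measure M A) *\<^sub>R f x)"
    using A(1) f by (simp add: integral_density)
  then show ?thesis
    by (simp add: divide_inverse_commute flip: scaleR_scaleR)
qed

lemma distr_uniform_measure_invariant:
  assumes T: "T \<in> M \<rightarrow>\<^sub>M M" and inv: "distr M M T = M"
    and A: "A \<in> sets M" "T -` A \<inter> space M = A"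
  shows "distr (uniform_measure M A) M T = uniform_measure M A"
proof (rule measure_eqI)
  fix B assume "B \<in> sets (distr (uniform_measure M A) M T)"
  then have B: "B \<in> sets M"
    by simp
  have pre: "A \<inter> (T -` B \<inter> space M) = T -` (A \<inter> B) \<inter> space M"
    using A(2) by blast
  have "emeasure (distr (uniform_measure M A) M T) B = emeasure M (A \<inter> (T -` B \<inter> space M)) / emeasure M A"
    using T A B by (simp add: emeasure_distr measurable_sets)
  also have "\<dots> = emeasure M (T -` (A \<inter> B) \<inter> space M) / emeasure M A"
    by (simp only: pre)
  also have "\<dots> = emeasure (distr M M T) (A \<inter> B) / emeasure M A"
    using T A B by (simp add: emeasure_distr)
  finally show "emeasure (distr (uniform_measure M A) M T) B = emeasure (uniform_measure M A) B"
    using A B by (simp add: inv)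
qed simp

lemma emeasure_lborel_ball_pos: "r > 0 \<Longrightarrow> emeasure lborel (ball (c::'a::euclidean_space) r) > 0"
  by (simp add: emeasure_ball unit_ball_vol_pos)

lemma AE_lborel_not_in_negligible: "negligible S \<Longrightarrow> AE x in lborel. x \<notin> S"
  using AE_not_in[of S lebesgue] by (simp add: negligible_iff_null_sets AE_completion_iff)

lemma negligible_norm_graph:
  fixes e :: "'a::euclidean_space"
  assumes "e \<noteq> 0"
  shows "negligible ((\<lambda>h. h + (c * norm h) *\<^sub>R e) ` {h. e \<bullet> h = 0})"
proof (rule negligible_locally_Lipschitz_image)
  show "negligible {h. e \<bullet> h = 0}"
    using assms by (intro negligible_hyperplane) simp
  fix x :: 'a
  have "norm ((y + (c * norm y) *\<^sub>R e) - (x + (c * norm x) *\<^sub>R e)) \<le> (1 + \<bar>c\<bar> * norm e) * norm (y - x)"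
    for y
  proof -
    have "norm ((y + (c * norm y) *\<^sub>R e) - (x + (c * norm x) *\<^sub>R e))
        = norm ((y - x) + (c * (norm y - norm x)) *\<^sub>R e)"
      by (simp add: algebra_simps)
    also have "\<dots> \<le> norm (y - x) + \<bar>c\<bar> * \<bar>norm y - norm x\<bar> * norm e"
      by (rule order_trans[OF norm_triangle_ineq]) (simp add: abs_mult)
    also have "\<dots> \<le> norm (y - x) + \<bar>c\<bar> * norm (y - x) * norm e"
      by (intro add_left_mono mult_right_mono mult_left_mono norm_triangle_ineq3) auto
    finally show ?thesis
      by (simp add: algebra_simps)
  qed
  then show "\<exists>T B. open T \<and> x \<in> T \<and> (\<forall>y\<in>{h. e \<bullet> h = 0} \<inter> T.
      norm ((y + (c * norm y) *\<^sub>R e) - (x + (c * norm x) *\<^sub>R e)) \<le> B * norm (y - x))"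
    by (intro exI[of _ UNIV]) auto
qed simp

lemma measurable_normalize [measurable]:
  "(\<lambda>x::'a::euclidean_space. x /\<^sub>R norm x) \<in> borel_measurable borel"
  by measurable

lemma scaled_lattice_norm_ge:
  fixes k :: "real^'n::finite"
  assumes "k \<in> scaled_lattice \<gamma>" "k \<noteq> 0" "0 < \<gamma>"
  shows "\<gamma> \<le> norm k"
proof -
  obtain j where j: "k $ j \<noteq> 0"
    using assms(2) by (auto simp: vec_eq_iff)
  obtain m :: int where m: "k $ j = \<gamma> * m"
    using assms(1) unfolding scaled_lattice_def by blast
  then have "1 \<le> \<bar>real_of_int m\<bar>"
    using j by auto
  then have "\<gamma> \<le> \<bar>k $ j\<bar>"
    using m assms(3) by (simp add: abs_mult)
  also have "\<dots> \<le> norm k"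
    by (rule component_le_norm_cart)
  finally show ?thesis .
qed

section \<open>The normalized surface measure\<close>

definition sphere_measure :: "(real^'n::finite) measure" where
  "sphere_measure = distr (uniform_measure lborel (ball 0 1)) borel (\<lambda>x. x /\<^sub>R norm x)"

lemma sets_sphere_measure [simp, measurable_cong]: "sets sphere_measure = sets borel"
  by (simp add: sphere_measure_def)

lemma space_sphere_measure [simp]: "space sphere_measure = UNIV"
  by (simp add: sphere_measure_def)

lemma sph_avg_eq_integral:
  fixes f :: "real^'n::finite \<Rightarrow> 'b::{banach, second_countable_topology}"
  assumes [measurable]: "f \<in> borel_measurable borel"
  shows "sph_avg f = integral\<^sup>L sphere_measure f"
proof -
  let ?B = "ball (0::real^'n) 1"
  have [measurable]: "?B \<in> sets borel"
    by simp
  have "integral\<^sup>L sphere_measure f = integral\<^sup>L (uniform_measure lborel ?B) (\<lambda>x. f (x /\<^sub>R norm x))"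
    unfolding sphere_measure_def by (rule integral_distr) measurable
  also have "\<dots> = (1 / measure lborel ?B) *\<^sub>R integral\<^sup>L lborel (\<lambda>x. indicator ?B x *\<^sub>R f (x /\<^sub>R norm x))"
    using emeasure_lborel_ball_pos[of 1 "0::real^'n"] emeasure_lborel_ball_finite[of "0::real^'n" 1]
    by (intro integral_uniform_measure) auto
  also have "integral\<^sup>L lborel (\<lambda>x. indicator ?B x *\<^sub>R f (x /\<^sub>R norm x))
      = integral\<^sup>L lebesgue (\<lambda>x. indicator ?B x *\<^sub>R f (x /\<^sub>R norm x))"
    by (rule integral_completion[symmetric]) measurable
  also have "\<dots> = integral\<^sup>L (lebesgue_on ?B) (\<lambda>x. f (x /\<^sub>R norm x))"
    by (subst integral_restrict_space) auto
  finally show ?thesis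
    by (simp add: sph_avg_def measure_completion)
qed

lemma prob_space_sphere_measure: "prob_space (sphere_measure :: (real^'n::finite) measure)"
  unfolding sphere_measure_def
  using emeasure_lborel_ball_pos[of 1 "0::real^'n"] emeasure_lborel_ball_finite[of "0::real^'n" 1]
  by (intro prob_space.prob_space_distr prob_space_uniform_measure) auto

lemma AE_sphere_measure_norm: "AE w in (sphere_measure :: (real^'n::finite) measure). norm w = 1"
proof -
  have "AE x in lborel. norm ((x::real^'n) /\<^sub>R norm x) = 1"
    using AE_lborel_singleton[of 0] by eventually_elim simp
  then show ?thesis
    unfolding sphere_measure_def
    by (subst AE_distr_iff) (auto intro!: AE_uniform_measureI elim!: AE_mp)
qed

lemma AE_sphere_measureI:
  assumes "AE x in lborel. P (x /\<^sub>R norm x)" and [measurable]: "Measurable.pred borel P"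
  shows "AE w in (sphere_measure :: (real^'n::finite) measure). P w"
  using assms(1) unfolding sphere_measure_def
  by (subst AE_distr_iff) (auto intro!: AE_uniform_measureI elim!: AE_mp)

lemma integrable_sphere_measure:
  fixes f :: "real^'n::finite \<Rightarrow> 'b::{banach, second_countable_topology}"
  assumes "f \<in> borel_measurable borel" and bound: "\<And>w. norm w = 1 \<Longrightarrow> norm (f w) \<le> C"
  shows "integrable sphere_measure f"
proof -
  interpret prob_space "sphere_measure :: (real^'n) measure"
    by (rule prob_space_sphere_measure)
  have "AE w in sphere_measure. norm (f w) \<le> C"
    using AE_sphere_measure_norm by eventually_elim (rule bound)
  then show ?thesis
    using assms(1) by (intro integrable_const_bound) auto
qed

lemma emeasure_sphere_measure_pos:
  fixes p :: "real^'n::finite"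
  assumes U: "open U" "p \<in> U" and p: "norm p = 1"
  shows "0 < emeasure sphere_measure U"
proof -
  let ?B = "ball (0::real^'n) 1" and ?N = "\<lambda>x::real^'n. x /\<^sub>R norm x"
  have "isCont ?N (p /\<^sub>R 2)"
    using p by (intro continuous_intros) auto
  moreover have "?N (p /\<^sub>R 2) \<in> U"
    using U p by simp
  ultimately obtain S where S: "open S" "p /\<^sub>R 2 \<in> S" "\<forall>x\<in>S. ?N x \<in> U"
    using U(1) unfolding continuous_at_open by blast
  have "open (S \<inter> ?B)" "p /\<^sub>R 2 \<in> S \<inter> ?B"
    using S p by auto
  then obtain r where r: "r > 0" "ball (p /\<^sub>R 2) r \<subseteq> S \<inter> ?B"
    by (meson open_contains_ball)
  have pre: "?N -` U \<in> sets borel"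
    using measurable_sets[OF measurable_normalize, of U] U(1) by simp
  then have meas: "?B \<inter> ?N -` U \<in> sets borel"
    by (intro sets.Int) auto
  have "0 < emeasure lborel (ball (p /\<^sub>R 2) r)"
    using r(1) by (rule emeasure_lborel_ball_pos)
  also have "\<dots> \<le> emeasure lborel (?B \<inter> ?N -` U)"
    using r S meas by (intro emeasure_mono) auto
  finally have "0 < emeasure lborel (?B \<inter> ?N -` U) / emeasure lborel ?B"
    using emeasure_lborel_ball_finite[of "0::real^'n" 1] by (simp add: ennreal_zero_less_divide)
  also have "\<dots> = emeasure sphere_measure U"
    using pre meas U(1) by (simp add: sphere_measure_def emeasure_distr)
  finally show ?thesis .
qed

definition signed_perm :: "('n::finite \<Rightarrow> 'n) \<Rightarrow> ('n \<Rightarrow> real) \<Rightarrow> real^'n \<Rightarrow> real^'n" where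
  "signed_perm p s x = (\<chi> i. s i * x $ p i)"

lemma linear_signed_perm: "linear (signed_perm p s)"
  by (auto simp: linear_iff vec_eq_iff algebra_simps signed_perm_def)

lemma measurable_signed_perm [measurable]: "signed_perm p s \<in> borel_measurable borel"
  using linear_signed_perm
  by (intro borel_measurable_continuous_onI linear_continuous_on linear_conv_bounded_linear[THEN iffD1])

lemma norm_signed_perm:
  assumes p: "bij p" and s: "\<And>i. \<bar>s i\<bar> = 1"
  shows "norm (signed_perm p s x) = norm x"
proof -
  have "(s i)\<^sup>2 = 1" for i
    by (metis s power2_abs power_one)
  then have "(\<Sum>i\<in>UNIV. (s i * x $ p i)\<^sup>2) = (\<Sum>i\<in>UNIV. (x $ p i)\<^sup>2)"
    by (simp add: power_mult_distrib)
  also have "\<dots> = (\<Sum>i\<in>UNIV. (x $ i)\<^sup>2)"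
    using sum.reindex_bij_betw[of p UNIV UNIV "\<lambda>i. (x $ i)\<^sup>2"] p by (simp add: bij_betw_def)
  finally show ?thesis
    by (simp add: norm_vec_def L2_set_def signed_perm_def)
qed

lemma prod_Basis_vec: "(\<Prod>b\<in>(Basis::(real^'n::finite) set). f b) = (\<Prod>i\<in>UNIV. f (axis i 1))"
proof -
  have B: "(Basis::(real^'n) set) = range (\<lambda>i. axis i 1)"
    by (auto simp: Basis_vec_def)
  have "inj (\<lambda>i::'n. axis i (1::real))"
    by (auto simp: inj_def axis_eq_axis)
  then show ?thesis
    unfolding B by (simp add: prod.reindex)
qed

lemma vimage_signed_perm_box:
  fixes p :: "'n::finite \<Rightarrow> 'n"
  assumes p: "bij p" and s: "\<And>i. \<bar>s i\<bar> = 1" and lu: "\<And>i. l $ i \<le> u $ i"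
  shows "signed_perm p s -` box l u
    = box (\<chi> j. min (s (inv p j) * l $ inv p j) (s (inv p j) * u $ inv p j))
          (\<chi> j. max (s (inv p j) * l $ inv p j) (s (inv p j) * u $ inv p j))"
proof -
  have pq: "p (inv p j) = j" and qp: "inv p (p j) = j" for j
    using p by (simp_all add: bij_def surj_f_inv_f inv_f_f)
  have s1: "s i = 1 \<or> s i = -1" for i
    using s[of i] by linarith
  have "x \<in> signed_perm p s -` box l u
      \<longleftrightarrow> (\<forall>j. l $ inv p j < s (inv p j) * x $ j \<and> s (inv p j) * x $ j < u $ inv p j)" for x
    by (simp add: signed_perm_def mem_box_cart) (metis pq qp)
  moreover have "l $ i < s i * y \<and> s i * y < u $ i
      \<longleftrightarrow> min (s i * l $ i) (s i * u $ i) < y \<and> y < max (s i * l $ i) (s i * u $ i)" for i y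
    using s1[of i] lu[of i] by auto
  ultimately show ?thesis
    by (auto simp: mem_box_cart)
qed

lemma lborel_signed_perm:
  fixes p :: "'n::finite \<Rightarrow> 'n"
  assumes p: "bij p" and s: "\<And>i. \<bar>s i\<bar> = 1"
  shows "distr lborel borel (signed_perm p s) = lborel"
proof (rule lborel_eqI[symmetric])
  fix l u :: "real^'n"
  assume "\<And>b. b \<in> Basis \<Longrightarrow> l \<bullet> b \<le> u \<bullet> b"
  then have lu: "l $ i \<le> u $ i" for i
    by (force simp: Basis_vec_def inner_axis)
  let ?l = "\<chi> j. min (s (inv p j) * l $ inv p j) (s (inv p j) * u $ inv p j)"
  let ?u = "\<chi> j. max (s (inv p j) * l $ inv p j) (s (inv p j) * u $ inv p j)"
  have edge: "max (s (inv p j) * l $ inv p j) (s (inv p j) * u $ inv p j)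
      - min (s (inv p j) * l $ inv p j) (s (inv p j) * u $ inv p j) = u $ inv p j - l $ inv p j" for j
    using s[of "inv p j"] lu[of "inv p j"] by (auto simp: abs_if split: if_splits)
  have "emeasure (distr lborel borel (signed_perm p s)) (box l u) = emeasure lborel (box ?l ?u)"
    by (simp add: emeasure_distr vimage_signed_perm_box[OF p s lu])
  also have "\<dots> = (\<Prod>j\<in>UNIV. u $ inv p j - l $ inv p j)"
  proof -
    have "\<forall>b\<in>Basis. ?l \<bullet> b \<le> ?u \<bullet> b"
      by (auto simp: Basis_vec_def inner_axis)
    then show ?thesis
      by (simp add: emeasure_lborel_box_eq prod_Basis_vec inner_axis edge)
  qed
  also have "\<dots> = (\<Prod>i\<in>UNIV. u $ i - l $ i)"
    using prod.reindex_bij_betw[of "inv p" UNIV UNIV "\<lambda>i. u $ i - l $ i"] bij_imp_bij_inv[OF p]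
    by (simp add: bij_betw_def)
  finally show "emeasure (distr lborel borel (signed_perm p s)) (box l u) = (\<Prod>b\<in>Basis. (u - l) \<bullet> b)"
    by (simp add: prod_Basis_vec inner_axis)
qed simp

lemma sphere_measure_signed_perm:
  fixes p :: "'n::finite \<Rightarrow> 'n"
  assumes p: "bij p" and s: "\<And>i. \<bar>s i\<bar> = 1"
  shows "distr sphere_measure borel (signed_perm p s) = sphere_measure"
proof -
  let ?T = "signed_perm p s" and ?U = "uniform_measure lborel (ball (0::real^'n) 1)"
  have "distr lborel lborel ?T = lborel"
    using lborel_signed_perm[of p s, OF p s] by (simp cong: distr_cong)
  then have U: "distr ?U lborel ?T = ?U"
    using norm_signed_perm[of p s, OF p s] by (intro distr_uniform_measure_invariant) auto
  have "?T (x /\<^sub>R norm x) = ?T x /\<^sub>R norm (?T x)" for x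
    by (simp add: linear_scale[OF linear_signed_perm] norm_signed_perm[of p s, OF p s])
  then have "?T \<circ> (\<lambda>x. x /\<^sub>R norm x) = (\<lambda>x. x /\<^sub>R norm x) \<circ> ?T"
    by auto
  then have "distr ?U borel (?T \<circ> (\<lambda>x. x /\<^sub>R norm x)) = distr (distr ?U lborel ?T) borel (\<lambda>x. x /\<^sub>R norm x)"
    by (simp add: distr_distr)
  then show ?thesis
    unfolding sphere_measure_def U by (simp add: distr_distr)
qed

lemma exists_other_index:
  fixes i :: "'n::finite"
  assumes "CARD('n) \<ge> 2"
  obtains j where "j \<noteq> i"
proof -
  have "\<not> UNIV \<subseteq> {i}"
  proof
    assume "UNIV \<subseteq> {i}"
    then have "CARD('n) \<le> card {i}"
      by (intro card_mono) auto
    with assms show False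
      by simp
  qed
  then show ?thesis
    using that by blast
qed

lemma negligible_coordinate_cone_less_one:
  fixes i :: "'n::finite"
  assumes t: "\<bar>t\<bar> < 1"
  shows "negligible {x::real^'n. x $ i = t * norm x}"
proof -
  define e :: "real^'n" where "e = axis i 1"
  define c where "c = t / sqrt (1 - t\<^sup>2)"
  have sqrt_pos: "sqrt (1 - t\<^sup>2) > 0"
    using t by (simp add: abs_square_less_1)
  \<comment> \<open>The cone is the graph of \<open>h \<mapsto> c * norm h\<close> over the hyperplane \<open>x $ i = 0\<close>.\<close>
  have "x \<in> (\<lambda>h. h + (c * norm h) *\<^sub>R e) ` {h. e \<bullet> h = 0}" if x: "x $ i = t * norm x" for x
  proof -
    define h where "h = x - (x $ i) *\<^sub>R e"
    have hH: "e \<bullet> h = 0"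
      by (simp add: h_def e_def inner_axis' inner_diff_right)
    then have "orthogonal h ((x $ i) *\<^sub>R e)"
      by (simp add: orthogonal_def inner_commute)
    then have "(norm (h + (x $ i) *\<^sub>R e))\<^sup>2 = (norm h)\<^sup>2 + (norm ((x $ i) *\<^sub>R e))\<^sup>2"
      by (rule norm_add_Pythagorean)
    then have "(norm x)\<^sup>2 = (norm h)\<^sup>2 + (x $ i)\<^sup>2"
      by (simp add: h_def e_def)
    then have "(norm h)\<^sup>2 = (norm x * sqrt (1 - t\<^sup>2))\<^sup>2"
      using x sqrt_pos by (simp add: power_mult_distrib algebra_simps)
    then have "norm h = norm x * sqrt (1 - t\<^sup>2)"
      using sqrt_pos by (simp add: power2_eq_iff_nonneg)
    then have "x = h + (c * norm h) *\<^sub>R e"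
      using sqrt_pos x by (simp add: c_def h_def)
    with hH show ?thesis
      by blast
  qed
  then have "{x. x $ i = t * norm x} \<subseteq> (\<lambda>h. h + (c * norm h) *\<^sub>R e) ` {h. e \<bullet> h = 0}"
    by blast
  moreover have "negligible ((\<lambda>h. h + (c * norm h) *\<^sub>R e) ` {h. e \<bullet> h = 0})"
    by (rule negligible_norm_graph) (simp add: e_def axis_eq_0_iff)
  ultimately show ?thesis
    by (rule negligible_subset[rotated])
qed

lemma negligible_coordinate_cone:
  fixes i :: "'n::finite"
  assumes card: "CARD('n) \<ge> 2"
  shows "negligible {x::real^'n. x $ i = t * norm x}"
proof (cases "\<bar>t\<bar> < 1")
  case True
  then show ?thesis
    by (rule negligible_coordinate_cone_less_one)
next
  case False
  obtain j :: 'n where j: "j \<noteq> i"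
    using exists_other_index[OF card] .
  \<comment> \<open>For \<open>\<bar>t\<bar> \<ge> 1\<close> the cone degenerates to (at most) a half-line.\<close>
  have "x $ j = 0" if x: "x $ i = t * norm x" for x :: "real^'n"
  proof -
    have "(x $ i)\<^sup>2 + (x $ j)\<^sup>2 = (\<Sum>k\<in>{i, j}. (x $ k)\<^sup>2)"
      using j by simp
    also have "\<dots> \<le> (\<Sum>k\<in>UNIV. (x $ k)\<^sup>2)"
      by (rule sum_mono2) auto
    also have "\<dots> = (norm x)\<^sup>2"
      by (simp add: norm_vec_def L2_set_def sum_nonneg)
    also have "\<dots> \<le> t\<^sup>2 * (norm x)\<^sup>2"
    proof -
      have "1 \<le> t\<^sup>2"
        using False abs_square_less_1[of t] by linarith
      then show ?thesis
        by (metis mult_1 mult_right_mono zero_le_power2)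
    qed
    also have "\<dots> = (x $ i)\<^sup>2"
      using x by (simp add: power_mult_distrib)
    finally show ?thesis
      by simp
  qed
  then have "{x::real^'n. x $ i = t * norm x} \<subseteq> {x. axis j 1 \<bullet> x = 0}"
    by (auto simp: inner_axis')
  moreover have "negligible {x::real^'n. axis j 1 \<bullet> x = 0}"
    by (intro negligible_hyperplane) (simp add: axis_eq_0_iff)
  ultimately show ?thesis
    by (rule negligible_subset[rotated])
qed

lemma AE_sphere_measure_coordinate_neq:
  fixes i :: "'n::finite"
  assumes "CARD('n) \<ge> 2"
  shows "AE w in (sphere_measure :: (real^'n) measure). w $ i \<noteq> t"
proof (rule AE_sphere_measureI)
  show "AE x in lborel. (x /\<^sub>R norm x) $ i \<noteq> t"
    using AE_lborel_not_in_negligible[OF negligible_coordinate_cone[OF assms, of i t]]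
  proof eventually_elim
    case (elim x)
    show ?case
    proof
      assume "(x /\<^sub>R norm x) $ i = t"
      then have "x $ i = t * norm x"
        by (cases "x = 0") (auto simp: field_simps)
      with elim show False
        by simp
    qed
  qed
qed measurable

section \<open>The law of a coordinate\<close>

definition coordinate_law :: "'n::finite \<Rightarrow> real measure" where
  "coordinate_law i = distr (sphere_measure :: (real^'n) measure) borel (\<lambda>w. w $ i)"

lemma sets_coordinate_law [simp, measurable_cong]: "sets (coordinate_law i) = sets borel"
  by (simp add: coordinate_law_def)

lemma space_coordinate_law [simp]: "space (coordinate_law i) = UNIV"
  by (simp add: coordinate_law_def)

lemma real_distribution_coordinate_law: "real_distribution (coordinate_law i)"
  unfolding coordinate_law_def
  by (intro prob_space.real_distribution_distr prob_space_sphere_measure) simp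

lemma measure_coordinate_law_UNIV [simp]: "measure (coordinate_law i) UNIV = 1"
proof -
  interpret real_distribution "coordinate_law i"
    by (rule real_distribution_coordinate_law)
  show ?thesis
    using prob_space by simp
qed

lemma AE_coordinate_law_abs_le:
  fixes i :: "'n::finite"
  shows "AE x in coordinate_law i. \<bar>x\<bar> \<le> 1"
proof -
  have "AE w in (sphere_measure :: (real^'n) measure). \<bar>w $ i\<bar> \<le> 1"
    using AE_sphere_measure_norm by eventually_elim (metis component_le_norm_cart)
  then show ?thesis
    unfolding coordinate_law_def by (subst AE_distr_iff) auto
qed

lemma integrable_coordinate_law:
  fixes f :: "real \<Rightarrow> 'b::{banach, second_countable_topology}"
  assumes "f \<in> borel_measurable borel" and bound: "\<And>x. \<bar>x\<bar> \<le> 1 \<Longrightarrow> norm (f x) \<le> C"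
  shows "integrable (coordinate_law i) f"
proof -
  interpret real_distribution "coordinate_law i"
    by (rule real_distribution_coordinate_law)
  have "AE x in coordinate_law i. norm (f x) \<le> C"
    using AE_coordinate_law_abs_le[of i] by eventually_elim (rule bound)
  then show ?thesis
    using assms(1) by (intro integrable_const_bound) auto
qed

lemma integrable_coordinate_law_const [simp]:
  "integrable (coordinate_law i) (\<lambda>_. c :: 'b::{banach, second_countable_topology})"
  by (rule integrable_coordinate_law[where C="norm c"]) auto

lemma integrable_coordinate_law_square [simp]: "integrable (coordinate_law i) (\<lambda>x. x\<^sup>2)"
  by (rule integrable_coordinate_law[where C=1]) (auto simp: abs_square_le_1)

lemma coordinate_law_uminus:
  fixes i :: "'n::finite"
  shows "distr (coordinate_law i) borel uminus = coordinate_law i"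
proof -
  define R :: "real^'n \<Rightarrow> real^'n" where "R = signed_perm id (\<lambda>j. if j = i then -1 else 1)"
  have "distr (coordinate_law i) borel uminus = distr sphere_measure borel (uminus \<circ> (\<lambda>w::real^'n. w $ i))"
    unfolding coordinate_law_def by (rule distr_distr) auto
  also have "uminus \<circ> (\<lambda>w::real^'n. w $ i) = (\<lambda>w. w $ i) \<circ> R"
    by (auto simp: R_def signed_perm_def)
  also have "distr sphere_measure borel ((\<lambda>w. w $ i) \<circ> R) = distr (distr sphere_measure borel R) borel (\<lambda>w. w $ i)"
    unfolding R_def by (rule distr_distr[symmetric]) auto
  also have "distr sphere_measure borel R = sphere_measure"
    unfolding R_def by (rule sphere_measure_signed_perm) auto
  finally show ?thesis
    unfolding coordinate_law_def .
qed

lemma integral_coordinate_law_reflect: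
  fixes f :: "real \<Rightarrow> 'b::{banach, second_countable_topology}"
  assumes "f \<in> borel_measurable borel"
  shows "integral\<^sup>L (coordinate_law i) (\<lambda>x. f (- x)) = integral\<^sup>L (coordinate_law i) f"
  using integral_distr[of uminus "coordinate_law i" borel f] assms
  by (simp add: coordinate_law_uminus)

lemma norm_integral_coordinate_law_le_symmetric:
  fixes f :: "real \<Rightarrow> 'b::{banach, second_countable_topology}"
  assumes f: "integrable (coordinate_law i) f" and g: "integrable (coordinate_law i) g"
    and le: "\<And>x. norm (f x) + norm (f (- x)) \<le> 2 * g x"
  shows "norm (integral\<^sup>L (coordinate_law i) f) \<le> integral\<^sup>L (coordinate_law i) g"
proof -
  have [measurable]: "f \<in> borel_measurable borel"
    using borel_measurable_integrable[OF f] by (simp cong: measurable_cong_sets)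
  have f': "integrable (coordinate_law i) (\<lambda>x. f (- x))"
    using f integrable_distr_eq[of uminus "coordinate_law i" borel f] by (simp add: coordinate_law_uminus)
  have "integral\<^sup>L (coordinate_law i) f = (1 / 2) *\<^sub>R integral\<^sup>L (coordinate_law i) (\<lambda>x. f x + f (- x))"
    using f f' by (simp add: integral_coordinate_law_reflect scaleR_2[symmetric])
  also have "norm \<dots> \<le> (1 / 2) * integral\<^sup>L (coordinate_law i) (\<lambda>x. norm (f x + f (- x)))"
    by (simp add: integral_norm_bound)
  also have "\<dots> \<le> (1 / 2) * integral\<^sup>L (coordinate_law i) (\<lambda>x. 2 * g x)"
    using f f' g le by (intro mult_left_mono integral_mono order_trans[OF norm_triangle_ineq]) auto
  finally show ?thesis
    by simp
qed

lemma coordinate_law_eq: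
  fixes i j :: "'n::finite"
  shows "coordinate_law i = coordinate_law j"
proof -
  define T :: "real^'n \<Rightarrow> real^'n" where "T = signed_perm (Transposition.transpose i j) (\<lambda>_. 1)"
  have "coordinate_law i = distr sphere_measure borel ((\<lambda>w. w $ j) \<circ> T)"
    unfolding coordinate_law_def by (rule arg_cong[where f="distr _ _"]) (auto simp: T_def signed_perm_def)
  also have "\<dots> = distr (distr sphere_measure borel T) borel (\<lambda>w. w $ j)"
    unfolding T_def by (rule distr_distr[symmetric]) auto
  also have "distr sphere_measure borel T = sphere_measure"
    unfolding T_def by (rule sphere_measure_signed_perm) auto
  finally show ?thesis
    unfolding coordinate_law_def .
qed

lemma integral_coordinate_law_square:
  fixes i :: "'n::finite"
  shows "integral\<^sup>L (coordinate_law i) (\<lambda>x. x\<^sup>2) = 1 / CARD('n)"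
proof -
  interpret prob_space "sphere_measure :: (real^'n) measure"
    by (rule prob_space_sphere_measure)
  have int: "integrable sphere_measure (\<lambda>w::real^'n. (w $ j)\<^sup>2)" for j
  proof (rule integrable_sphere_measure[where C=1])
    fix w :: "real^'n"
    assume "norm w = 1"
    then have "\<bar>w $ j\<bar> \<le> 1"
      using component_le_norm_cart[of w j] by simp
    then show "norm ((w $ j)\<^sup>2) \<le> 1"
      by (simp add: abs_square_le_1)
  qed measurable
  have moment: "integral\<^sup>L (coordinate_law i) (\<lambda>x. x\<^sup>2) = integral\<^sup>L sphere_measure (\<lambda>w::real^'n. (w $ j)\<^sup>2)" for j
  proof -
    have "integral\<^sup>L (coordinate_law j) (\<lambda>x. x\<^sup>2) = integral\<^sup>L sphere_measure (\<lambda>w::real^'n. (w $ j)\<^sup>2)"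
      unfolding coordinate_law_def by (rule integral_distr) auto
    then show ?thesis
      by (simp add: coordinate_law_eq[of i j])
  qed
  have "1 = integral\<^sup>L sphere_measure (\<lambda>w::real^'n. (norm w)\<^sup>2)"
    using AE_sphere_measure_norm prob_space by (subst integral_cong_AE[where g="\<lambda>_. 1"]) auto
  also have "\<dots> = (\<Sum>j\<in>UNIV. integral\<^sup>L sphere_measure (\<lambda>w::real^'n. (w $ j)\<^sup>2))"
    unfolding power2_norm_eq_inner inner_vec_def using int by (simp add: power2_eq_square)
  also have "\<dots> = CARD('n) * integral\<^sup>L (coordinate_law i) (\<lambda>x. x\<^sup>2)"
    by (simp flip: moment)
  finally show ?thesis
    by (simp add: field_simps)
qed

lemma AE_coordinate_law_neq:
  fixes i :: "'n::finite"
  assumes "CARD('n) \<ge> 2"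
  shows "AE x in coordinate_law i. x \<noteq> t"
  unfolding coordinate_law_def
  by (subst AE_distr_iff) (auto intro: AE_sphere_measure_coordinate_neq[OF assms])

lemma measure_coordinate_law_interval_pos:
  fixes i :: "'n::finite"
  assumes card: "CARD('n) \<ge> 2" and ab: "a < b" "a < 1" "-1 < b"
  shows "0 < measure (coordinate_law i) {a<..<b}"
proof -
  interpret real_distribution "coordinate_law i"
    by (rule real_distribution_coordinate_law)
  obtain j :: 'n where j: "j \<noteq> i"
    using exists_other_index[OF card] .
  define c where "c = (max a (-1) + min b 1) / 2"
  have c: "a < c" "c < b" "c\<^sup>2 < 1"
    using ab by (auto simp: c_def abs_square_less_1)
  define p :: "real^'n" where "p = c *\<^sub>R axis i 1 + sqrt (1 - c\<^sup>2) *\<^sub>R axis j 1"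
  have "orthogonal (c *\<^sub>R axis i (1::real)) (sqrt (1 - c\<^sup>2) *\<^sub>R axis j 1 :: real^'n)"
    using j by (simp add: orthogonal_def inner_axis_axis)
  then have "(norm p)\<^sup>2 = 1"
    using c(3) by (simp add: p_def norm_add_Pythagorean)
  then have "norm p = 1"
    using norm_ge_zero[of p] by (auto simp: power2_eq_1_iff)
  moreover have "p $ i = c"
    using j by (simp add: p_def axis_def)
  moreover have "open ((\<lambda>w::real^'n. w $ i) -` {a<..<b})"
    by (intro open_vimage continuous_intros)
  ultimately have "0 < emeasure sphere_measure ((\<lambda>w::real^'n. w $ i) -` {a<..<b})"
    using c by (intro emeasure_sphere_measure_pos) auto
  also have "\<dots> = emeasure (coordinate_law i) {a<..<b}"
    by (simp add: coordinate_law_def emeasure_distr)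
  finally show ?thesis
    by (simp add: emeasure_eq_measure)
qed

lemma isCont_cdf_coordinate_law:
  fixes i :: "'n::finite"
  assumes "CARD('n) \<ge> 2"
  shows "isCont (cdf (coordinate_law i)) x"
proof -
  interpret real_distribution "coordinate_law i"
    by (rule real_distribution_coordinate_law)
  have "measure (coordinate_law i) {x} = 0"
    using AE_coordinate_law_neq[OF assms, where i=i and t=x] by (subst prob_eq_0) auto
  then show ?thesis
    by (simp add: isCont_cdf)
qed

text \<open>The distribution function has no jumps, hence is uniformly continuous on \<open>[-3, 3]\<close>;
  intervals centred outside \<open>[-2, 2]\<close> miss the support \<open>[-1, 1]\<close>.\<close>

lemma coordinate_law_intervals_uniformly_small:
  fixes i :: "'n::finite"
  assumes card: "CARD('n) \<ge> 2" and \<eta>: "0 < \<eta>"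
  obtains \<delta> where "0 < \<delta>" "\<And>t. measure (coordinate_law i) {t - \<delta><..<t + \<delta>} \<le> \<eta>"
proof -
  interpret real_distribution "coordinate_law i"
    by (rule real_distribution_coordinate_law)
  have "continuous_on {-3..3} (cdf (coordinate_law i))"
    by (intro continuous_at_imp_continuous_on ballI isCont_cdf_coordinate_law[OF card])
  then have "uniformly_continuous_on {-3..3} (cdf (coordinate_law i))"
    by (rule compact_uniformly_continuous) simp
  then obtain d where d: "0 < d"
    and uc: "\<And>x y. x \<in> {-3..3} \<Longrightarrow> y \<in> {-3..3} \<Longrightarrow> dist y x < d
      \<Longrightarrow> dist (cdf (coordinate_law i) y) (cdf (coordinate_law i) x) < \<eta>"
    unfolding uniformly_continuous_on_def using \<eta> by metis
  define \<delta> where "\<delta> = min 1 (d / 3)"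
  have \<delta>: "0 < \<delta>" "\<delta> \<le> 1" "2 * \<delta> < d"
    using d by (auto simp: \<delta>_def)
  show ?thesis
  proof (rule that[OF \<delta>(1)])
    fix t :: real
    show "measure (coordinate_law i) {t - \<delta><..<t + \<delta>} \<le> \<eta>"
    proof (cases "\<bar>t\<bar> \<le> 2")
      case True
      have "measure (coordinate_law i) {t - \<delta><..<t + \<delta>} \<le> measure (coordinate_law i) {t - \<delta><..t + \<delta>}"
        by (intro finite_measure_mono) auto
      also have "\<dots> = cdf (coordinate_law i) (t + \<delta>) - cdf (coordinate_law i) (t - \<delta>)"
        using \<delta> by (simp add: cdf_diff_eq)
      also have "\<dots> < \<eta>"
        using uc[of "t - \<delta>" "t + \<delta>"] True \<delta> cdf_nondecreasing[of "t - \<delta>" "t + \<delta>"]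
        by (simp add: dist_real_def)
      finally show ?thesis
        by simp
    next
      case False
      have "AE x in coordinate_law i. x \<notin> {t - \<delta><..<t + \<delta>}"
        using AE_coordinate_law_abs_le[of i] by eventually_elim (use False \<delta> in auto)
      then show ?thesis
        using \<eta> by (subst prob_eq_0[THEN iffD2]) auto
    qed
  qed
qed

definition cj_integrand :: "nat \<Rightarrow> complex \<Rightarrow> real \<Rightarrow> real \<Rightarrow> complex" where
  "cj_integrand j z b x = complex_of_real (x ^ j) / (1 + z + \<i> * complex_of_real (b * x))"

lemma measurable_cj_integrand [measurable]: "cj_integrand j z b \<in> borel_measurable borel"
  unfolding cj_integrand_def[abs_def] by measurable

lemma cj_eq_integral: "cj i j z k = integral\<^sup>L (coordinate_law i) (cj_integrand j z (norm k))"
  unfolding cj_def coordinate_law_def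
  by (subst sph_avg_eq_integral) (auto simp: integral_distr cj_integrand_def)

definition square_above :: "real \<Rightarrow> real \<Rightarrow> real" where
  "square_above e x = (if e \<le> x then x\<^sup>2 else 0)"

lemma measurable_square_above [measurable]: "square_above e \<in> borel_measurable borel"
  unfolding square_above_def[abs_def] by measurable

lemma alpha2_eq_integral:
  fixes i :: "'n::finite"
  shows "alpha2 i e = CARD('n) * integral\<^sup>L (coordinate_law i) (square_above e)"
  unfolding alpha2_def coordinate_law_def
  by (subst sph_avg_eq_integral) (auto simp: integral_distr square_above_def)

section \<open>The coefficient \<open>\<alpha>\<^sub>2\<close>\<close>

lemma abs_square_above_le: "\<bar>x\<bar> \<le> 1 \<Longrightarrow> \<bar>square_above e x\<bar> \<le> 1"
  by (simp add: square_above_def abs_square_le_1)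

lemma integrable_square_above: "integrable (coordinate_law i) (square_above e)"
  by (rule integrable_coordinate_law[where C=1]) (auto intro: abs_square_above_le)

lemma alpha2_0:
  fixes i :: "'n::finite"
  shows "alpha2 i 0 = 1/2"
proof -
  have "square_above 0 x + square_above 0 (- x) = x\<^sup>2" for x
    by (auto simp: square_above_def)
  then have "integral\<^sup>L (coordinate_law i) (\<lambda>x. x\<^sup>2)
      = integral\<^sup>L (coordinate_law i) (\<lambda>x. square_above 0 x + square_above 0 (- x))"
    by simp
  also have "\<dots> = integral\<^sup>L (coordinate_law i) (square_above 0) + integral\<^sup>L (coordinate_law i) (\<lambda>x. square_above 0 (- x))"
  proof (rule Bochner_Integration.integral_add)
    show "integrable (coordinate_law i) (\<lambda>x. square_above 0 (- x))"
      by (rule integrable_coordinate_law[where C=1]) (auto intro: abs_square_above_le)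
  qed (rule integrable_square_above)
  also have "\<dots> = 2 * integral\<^sup>L (coordinate_law i) (square_above 0)"
    by (simp add: integral_coordinate_law_reflect)
  finally show ?thesis
    by (simp add: alpha2_eq_integral integral_coordinate_law_square field_simps)
qed

lemma alpha2_1:
  fixes i :: "'n::finite"
  assumes "CARD('n) \<ge> 2"
  shows "alpha2 i 1 = 0"
proof -
  have "AE x in coordinate_law i. square_above 1 x = 0"
    using AE_coordinate_law_abs_le[of i] AE_coordinate_law_neq[OF assms, where i=i and t=1]
    by eventually_elim (auto simp: square_above_def)
  then show ?thesis
    by (simp add: alpha2_eq_integral integral_eq_zero_AE)
qed

lemma continuous_alpha2:
  fixes i :: "'n::finite"
  assumes "CARD('n) \<ge> 2"
  shows "continuous (at e) (alpha2 i)"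
proof (rule continuous_at_sequentiallyI)
  fix u assume u: "u \<longlonglongrightarrow> e"
  \<comment> \<open>The integrands converge pointwise off the null set \<open>{e}\<close>.\<close>
  have "(\<lambda>n. integral\<^sup>L (coordinate_law i) (square_above (u n))) \<longlonglongrightarrow> integral\<^sup>L (coordinate_law i) (square_above e)"
  proof (rule integral_dominated_convergence[where w="\<lambda>_. 1"])
    show "AE x in coordinate_law i. (\<lambda>n. square_above (u n) x) \<longlonglongrightarrow> square_above e x"
      using AE_coordinate_law_neq[OF assms, where i=i and t=e]
    proof eventually_elim
      case (elim x)
      consider "x < e" | "e < x"
        using elim by linarith
      then have "eventually (\<lambda>n. u n \<le> x \<longleftrightarrow> e \<le> x) sequentially"
      proof cases
        case 1
        show ?thesis
          using order_tendstoD(1)[OF u 1] by eventually_elim (use 1 in auto)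
      next
        case 2
        show ?thesis
          using order_tendstoD(2)[OF u 2] by eventually_elim (use 2 in auto)
      qed
      then have "eventually (\<lambda>n. square_above (u n) x = square_above e x) sequentially"
        by eventually_elim (auto simp: square_above_def)
      then show ?case
        by (rule tendsto_eventually)
    qed
    show "AE x in coordinate_law i. norm (square_above (u n) x) \<le> 1" for n
      using AE_coordinate_law_abs_le[of i] by eventually_elim (auto simp: square_above_def abs_square_le_1)
  qed auto
  then show "(\<lambda>n. alpha2 i (u n)) \<longlonglongrightarrow> alpha2 i e"
    unfolding alpha2_eq_integral by (intro tendsto_mult tendsto_const)
qed

lemma alpha2_strict_decreasing:
  fixes i :: "'n::finite"
  assumes "CARD('n) \<ge> 2" and e: "0 \<le> e1" "e1 < e2" "e2 \<le> 1"
  shows "alpha2 i e2 < alpha2 i e1"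
proof -
  define m where "m = (e1 + e2) / 2"
  have m: "e1 < m" "m < e2" "0 < m"
    using e by (auto simp: m_def)
  have "0 < m\<^sup>2 * measure (coordinate_law i) {m<..<e2}"
    using m e by (intro mult_pos_pos measure_coordinate_law_interval_pos assms(1)) auto
  also have "\<dots> = integral\<^sup>L (coordinate_law i) (\<lambda>x. m\<^sup>2 * indicator {m<..<e2} x)"
    by simp
  also have "\<dots> \<le> integral\<^sup>L (coordinate_law i) (\<lambda>x. square_above e1 x - square_above e2 x)"
  proof (rule integral_mono)
    show "integrable (coordinate_law i) (\<lambda>x. m\<^sup>2 * indicator {m<..<e2} x)"
      by (rule integrable_coordinate_law[where C="m\<^sup>2"]) (auto simp: indicator_def)
    show "integrable (coordinate_law i) (\<lambda>x. square_above e1 x - square_above e2 x)"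
      using integrable_square_above[of i e1] integrable_square_above[of i e2] by simp
    show "m\<^sup>2 * indicator {m<..<e2} x \<le> square_above e1 x - square_above e2 x" for x
      using m e by (auto simp: square_above_def indicator_def intro: power_mono)
  qed
  also have "\<dots> = integral\<^sup>L (coordinate_law i) (square_above e1) - integral\<^sup>L (coordinate_law i) (square_above e2)"
    using integrable_square_above[of i e1] integrable_square_above[of i e2] by simp
  finally show ?thesis
    by (simp add: alpha2_eq_integral)
qed

section \<open>The coefficients \<open>c\<^sub>1\<close> and \<open>c\<^sub>2\<close>\<close>

lemma cmod_resolvent: "cmod (1 + z + \<i> * complex_of_real y) = sqrt ((1 + Re z)\<^sup>2 + (Im z + y)\<^sup>2)"
  by (simp add: norm_complex_def)

lemma one_le_cmod_resolvent:
  assumes "0 \<le> Re z"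
  shows "1 \<le> cmod (1 + z + \<i> * complex_of_real y)"
  using abs_Re_le_cmod[of "1 + z + \<i> * complex_of_real y"] assms by simp

text \<open>For one of the two signs \<open>\<bar>Im z \<plusminus> y\<bar> \<ge> \<bar>y\<bar>\<close>, so one of the two moduli is at least \<open>sqrt (1 + y\<^sup>2)\<close>.\<close>

lemma inverse_cmod_resolvent_pair_le:
  assumes z: "0 \<le> Re z"
  shows "1 / cmod (1 + z + \<i> * complex_of_real y) + 1 / cmod (1 + z + \<i> * complex_of_real (- y))
    \<le> 1 + 1 / sqrt (1 + y\<^sup>2)"
proof -
  have le1: "1 / cmod (1 + z + \<i> * complex_of_real y') \<le> 1" for y'
    using one_le_cmod_resolvent[OF z, of y'] by (simp add: divide_le_eq_1)
  have large: "1 / cmod (1 + z + \<i> * complex_of_real y') \<le> 1 / sqrt (1 + y\<^sup>2)"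
    if "y\<^sup>2 \<le> (Im z + y')\<^sup>2" for y'
  proof -
    have "1 \<le> (1 + Re z)\<^sup>2"
      using z by (simp add: one_le_power)
    then have le: "1 + y\<^sup>2 \<le> (1 + Re z)\<^sup>2 + (Im z + y')\<^sup>2"
      using that by linarith
    have pos: "0 < 1 + y\<^sup>2"
      by (simp add: add_pos_nonneg)
    show ?thesis
      unfolding cmod_resolvent using le pos
      by (intro divide_left_mono real_sqrt_le_mono mult_pos_pos real_sqrt_gt_zero) auto
  qed
  have "(Im z + y)\<^sup>2 + (Im z + - y)\<^sup>2 = 2 * (Im z)\<^sup>2 + 2 * y\<^sup>2"
    by (simp add: power2_eq_square algebra_simps)
  then have "y\<^sup>2 \<le> (Im z + y)\<^sup>2 \<or> y\<^sup>2 \<le> (Im z + - y)\<^sup>2"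
    using zero_le_power2[of "Im z"] by linarith
  then show ?thesis
    using le1[of y] le1[of "- y"] large[of y] large[of "- y"] by auto
qed

lemma norm_cj_integrand:
  "norm (cj_integrand j z b x) = \<bar>x\<bar> ^ j / cmod (1 + z + \<i> * complex_of_real (b * x))"
  by (simp add: cj_integrand_def norm_divide norm_power)

lemma integrable_cj_integrand:
  assumes "0 \<le> Re z"
  shows "integrable (coordinate_law i) (cj_integrand j z b)"
proof (rule integrable_coordinate_law[where C=1])
  fix x :: real
  assume "\<bar>x\<bar> \<le> 1"
  then have "\<bar>x\<bar> ^ j \<le> 1"
    by (simp add: power_le_one)
  then show "norm (cj_integrand j z b x) \<le> 1"
    using one_le_cmod_resolvent[OF assms, of "b * x"] by (simp add: norm_cj_integrand divide_le_eq_1)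
qed measurable

lemma norm_cj_integrand_pair_le:
  assumes "0 \<le> Re z"
  shows "norm (cj_integrand j z b x) + norm (cj_integrand j z b (- x))
    \<le> \<bar>x\<bar> ^ j * (1 + 1 / sqrt (1 + (b * x)\<^sup>2))"
  using mult_left_mono[OF inverse_cmod_resolvent_pair_le[OF assms, of "b * x"], of "\<bar>x\<bar> ^ j"]
  by (simp add: norm_cj_integrand field_simps)

lemma abs_le_sqrt_one_plus_square: "\<bar>y\<bar> \<le> sqrt (1 + y\<^sup>2)"
  by (metis real_sqrt_abs real_sqrt_le_mono le_add_same_cancel2 zero_le_one)

lemma norm_cj_integrand_1_pair_le:
  assumes z: "0 \<le> Re z" and b: "0 < b" and r: "0 < r"
  shows "norm (cj_integrand 1 z b x) + norm (cj_integrand 1 z b (- x)) \<le> r / 2 * x\<^sup>2 + 1 / (2 * r) + 1 / b"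
proof -
  have "\<bar>x\<bar> / sqrt (1 + (b * x)\<^sup>2) \<le> 1 / b"
    using abs_le_sqrt_one_plus_square[of "b * x"] b by (simp add: field_simps abs_mult add_pos_nonneg)
  moreover have "\<bar>x\<bar> \<le> r / 2 * x\<^sup>2 + 1 / (2 * r)"
    using r sum_squares_bound[of "r * \<bar>x\<bar>" 1] by (simp add: field_simps power2_eq_square)
  ultimately show ?thesis
    using norm_cj_integrand_pair_le[OF z, of 1 b x] by (simp add: field_simps)
qed

lemma norm_integral_cj_integrand_1_le:
  fixes i :: "'n::finite"
  assumes z: "0 \<le> Re z" and b: "0 < b"
  shows "norm (integral\<^sup>L (coordinate_law i) (cj_integrand 1 z b))
    \<le> 1 / (2 * sqrt CARD('n)) + 1 / (2 * b)"
proof -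
  define r where "r = sqrt CARD('n)"
  have r: "0 < r" "r\<^sup>2 = CARD('n)"
    by (simp_all add: r_def)
  \<comment> \<open>The weight \<open>r = sqrt d\<close> in the AM-GM bound for \<open>\<bar>x\<bar>\<close> is optimal for \<open>\<integral>x\<^sup>2 = 1/d\<close>.\<close>
  define g where "g x = r / 4 * x\<^sup>2 + (1 / (4 * r) + 1 / (2 * b))" for x
  have "norm (integral\<^sup>L (coordinate_law i) (cj_integrand 1 z b)) \<le> integral\<^sup>L (coordinate_law i) g"
  proof (rule norm_integral_coordinate_law_le_symmetric)
    show "integrable (coordinate_law i) g"
      unfolding g_def[abs_def] by simp
    show "norm (cj_integrand 1 z b x) + norm (cj_integrand 1 z b (- x)) \<le> 2 * g x" for x
      using norm_cj_integrand_1_pair_le[OF z b r(1), of x] by (simp add: g_def field_simps)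
  qed (rule integrable_cj_integrand[OF z])
  also have "\<dots> = r / 4 / CARD('n) + (1 / (4 * r) + 1 / (2 * b))"
    unfolding g_def by (simp add: integral_coordinate_law_square)
  also have "\<dots> = 1 / (2 * r) + 1 / (2 * b)"
    using r by (simp add: field_simps power2_eq_square)
  finally show ?thesis
    by (simp add: r_def)
qed

lemma inverse_sqrt_le_one_minus_phi2:
  assumes "0 \<le> u" "u \<le> \<bar>v\<bar>"
  shows "1 / sqrt (1 + v\<^sup>2) \<le> 1 - phi2 u"
proof -
  have "u\<^sup>2 \<le> v\<^sup>2"
    using assms by (metis abs_le_square_iff abs_of_nonneg)
  then have "1 / sqrt (1 + v\<^sup>2) \<le> 1 / sqrt (1 + u\<^sup>2)"
    by (intro divide_left_mono real_sqrt_le_mono mult_pos_pos) (auto intro: add_pos_nonneg)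
  then show ?thesis
    by (simp add: phi2_def)
qed

lemma norm_cj_integrand_2_pair_le:
  assumes z: "0 \<le> Re z" and \<gamma>: "0 < \<gamma>" "\<gamma> \<le> b" and \<epsilon>: "0 < \<epsilon>"
  shows "norm (cj_integrand 2 z b x) + norm (cj_integrand 2 z b (- x))
    \<le> 2 * x\<^sup>2 - phi2 (\<epsilon> * \<gamma>) * (square_above \<epsilon> x + square_above \<epsilon> (- x))"
proof -
  have pair: "norm (cj_integrand 2 z b x) + norm (cj_integrand 2 z b (- x)) \<le> x\<^sup>2 * (1 + 1 / sqrt (1 + (b * x)\<^sup>2))"
    using norm_cj_integrand_pair_le[OF z, of 2 b x] by simp
  show ?thesis
  proof (cases "\<epsilon> \<le> \<bar>x\<bar>")
    case True
    then have "square_above \<epsilon> x + square_above \<epsilon> (- x) = x\<^sup>2"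
      using \<epsilon> by (auto simp: square_above_def)
    moreover have "\<epsilon> * \<gamma> \<le> \<bar>x\<bar> * b"
      using True \<gamma> \<epsilon> by (intro mult_mono) auto
    then have "1 / sqrt (1 + (b * x)\<^sup>2) \<le> 1 - phi2 (\<epsilon> * \<gamma>)"
      using \<gamma> \<epsilon> by (intro inverse_sqrt_le_one_minus_phi2) (auto simp: abs_mult mult.commute)
    ultimately show ?thesis
      using pair mult_left_mono[of _ _ "x\<^sup>2"] by (fastforce simp: algebra_simps)
  next
    case False
    then have "square_above \<epsilon> x + square_above \<epsilon> (- x) = 0"
      by (auto simp: square_above_def)
    moreover have "1 / sqrt (1 + (b * x)\<^sup>2) \<le> 1"
      by (simp add: divide_le_eq_1 add_pos_nonneg)
    ultimately show ?thesis
      using pair mult_left_mono[of _ _ "x\<^sup>2"] by (fastforce simp: algebra_simps)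
  qed
qed

lemma norm_integral_cj_integrand_2_le:
  fixes i :: "'n::finite"
  assumes z: "0 \<le> Re z" and \<gamma>: "0 < \<gamma>" "\<gamma> \<le> b" and \<epsilon>: "0 < \<epsilon>"
  shows "CARD('n) * norm (integral\<^sup>L (coordinate_law i) (cj_integrand 2 z b))
    \<le> 1 - alpha2 i \<epsilon> * phi2 (\<epsilon> * \<gamma>)"
proof -
  define g where "g x = x\<^sup>2 - phi2 (\<epsilon> * \<gamma>) / 2 * (square_above \<epsilon> x + square_above \<epsilon> (- x))" for x
  have reflected: "integrable (coordinate_law i) (\<lambda>x. square_above \<epsilon> (- x))"
    by (rule integrable_coordinate_law[where C=1]) (auto intro: abs_square_above_le)
  have "norm (integral\<^sup>L (coordinate_law i) (cj_integrand 2 z b)) \<le> integral\<^sup>L (coordinate_law i) g"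
  proof (rule norm_integral_coordinate_law_le_symmetric)
    show "integrable (coordinate_law i) g"
      unfolding g_def[abs_def] using reflected integrable_square_above[of i \<epsilon>] by simp
    fix x
    have "2 * g x = 2 * x\<^sup>2 - phi2 (\<epsilon> * \<gamma>) * (square_above \<epsilon> x + square_above \<epsilon> (- x))"
      by (simp add: g_def)
    then show "norm (cj_integrand 2 z b x) + norm (cj_integrand 2 z b (- x)) \<le> 2 * g x"
      using norm_cj_integrand_2_pair_le[OF z \<gamma> \<epsilon>, of x] by linarith
  qed (rule integrable_cj_integrand[OF z])
  also have "\<dots> = 1 / CARD('n) - phi2 (\<epsilon> * \<gamma>) * integral\<^sup>L (coordinate_law i) (square_above \<epsilon>)"
    unfolding g_def[abs_def] using reflected integrable_square_above[of i \<epsilon>]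
    by (simp add: integral_coordinate_law_square integral_coordinate_law_reflect)
  finally show ?thesis
    by (simp add: alpha2_eq_integral field_simps)
qed

lemma norm_cj_1_le:
  fixes i :: "'n::finite"
  assumes "0 \<le> Re z" "0 < \<gamma>" "\<gamma> \<le> norm k"
  shows "norm (cj i 1 z k) \<le> 1 / (2 * sqrt CARD('n)) + 1 / \<gamma>"
proof -
  have "1 / (2 * norm k) \<le> 1 / \<gamma>"
    using assms by (simp add: frac_le)
  then show ?thesis
    unfolding cj_eq_integral using norm_integral_cj_integrand_1_le[OF assms(1), of "norm k" i] assms
    by linarith
qed

lemma norm_cj_2_le:
  fixes i :: "'n::finite"
  assumes "0 \<le> Re z" "0 < \<gamma>" "\<gamma> \<le> norm k" "0 < \<epsilon>"
  shows "CARD('n) * norm (cj i 2 z k) \<le> 1 - alpha2 i \<epsilon> * phi2 (\<epsilon> * \<gamma>)"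
  unfolding cj_eq_integral using assms by (rule norm_integral_cj_integrand_2_le)

section \<open>Continuous minorants\<close>

text \<open>The largest 1-Lipschitz minorant of \<open>h\<close>.\<close>

definition lipschitz_envelope :: "(real \<Rightarrow> real) \<Rightarrow> real \<Rightarrow> real" where
  "lipschitz_envelope h g = (INF t. h t + \<bar>g - t\<bar>)"

context
  fixes h :: "real \<Rightarrow> real"
  assumes nonneg: "\<And>t. 0 \<le> h t"
begin

lemma lipschitz_envelope_le: "lipschitz_envelope h g \<le> h t + \<bar>g - t\<bar>"
proof -
  have "bdd_below (range (\<lambda>t. h t + \<bar>g - t\<bar>))"
    using nonneg by (intro bdd_belowI2[where m=0]) (auto intro: add_nonneg_nonneg)
  then show ?thesis
    unfolding lipschitz_envelope_def by (rule cINF_lower) simp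
qed

lemma le_lipschitz_envelope: "(\<And>t. c \<le> h t + \<bar>g - t\<bar>) \<Longrightarrow> c \<le> lipschitz_envelope h g"
  unfolding lipschitz_envelope_def by (rule cINF_greatest) auto

lemma lipschitz_envelope_nonneg: "0 \<le> lipschitz_envelope h g"
  using nonneg by (intro le_lipschitz_envelope) (auto intro: add_nonneg_nonneg)

lemma lipschitz_envelope_le_self: "lipschitz_envelope h g \<le> h g"
  using lipschitz_envelope_le[of g g] by simp

lemma lipschitz_lipschitz_envelope: "1-lipschitz_on UNIV (lipschitz_envelope h)"
proof (rule lipschitz_onI)
  have lip: "lipschitz_envelope h g - \<bar>g - g'\<bar> \<le> lipschitz_envelope h g'" for g g'
  proof (rule le_lipschitz_envelope)
    fix t
    show "lipschitz_envelope h g - \<bar>g - g'\<bar> \<le> h t + \<bar>g' - t\<bar>"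
      using lipschitz_envelope_le[of g t] by linarith
  qed
  fix x y :: real
  show "dist (lipschitz_envelope h x) (lipschitz_envelope h y) \<le> 1 * dist x y"
    using lip[of x y] lip[of y x] by (simp add: dist_real_def abs_le_iff abs_minus_commute)
qed simp

lemma mono_lipschitz_envelope:
  assumes "mono h"
  shows "mono (lipschitz_envelope h)"
proof (rule monoI)
  fix g g' :: real
  assume "g \<le> g'"
  show "lipschitz_envelope h g \<le> lipschitz_envelope h g'"
  proof (rule le_lipschitz_envelope)
    fix t
    show "lipschitz_envelope h g \<le> h t + \<bar>g' - t\<bar>"
    proof (cases "g \<le> t")
      case True
      then show ?thesis
        using lipschitz_envelope_le_self[of g] monoD[OF assms True] by linarith
    next
      case False
      then show ?thesis
        using lipschitz_envelope_le[of g t] \<open>g \<le> g'\<close> by linarith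
    qed
  qed
qed

lemma tendsto_lipschitz_envelope:
  assumes le1: "\<And>t. h t \<le> 1" and mono: "mono h" and lim: "(h \<longlongrightarrow> 1) at_top"
  shows "(lipschitz_envelope h \<longlongrightarrow> 1) at_top"
proof (rule tendsto_sandwich[where f="\<lambda>g. h (g / 2)" and h="\<lambda>_. 1"])
  have "h (g / 2) \<le> lipschitz_envelope h g" if "2 \<le> g" for g
  proof (rule le_lipschitz_envelope)
    fix t
    show "h (g / 2) \<le> h t + \<bar>g - t\<bar>"
    proof (cases "g / 2 \<le> t")
      case True
      then show ?thesis
        using monoD[OF mono True] nonneg[of t] by linarith
    next
      case False
      then show ?thesis
        using nonneg[of t] le1[of "g / 2"] that by linarith
    qed
  qed
  then show "eventually (\<lambda>g. h (g / 2) \<le> lipschitz_envelope h g) at_top"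
    unfolding eventually_at_top_linorder by blast
  show "eventually (\<lambda>g. lipschitz_envelope h g \<le> 1) at_top"
    by (intro always_eventually allI order_trans[OF lipschitz_envelope_le_self le1])
  have "filterlim (\<lambda>g::real. g / 2) at_top at_top"
  proof (subst filterlim_at_top, intro allI)
    fix Z :: real
    show "eventually (\<lambda>g. Z \<le> g / 2) at_top"
      unfolding eventually_at_top_linorder by (intro exI[of _ "2 * Z"]) auto
  qed
  then show "((\<lambda>g. h (g / 2)) \<longlongrightarrow> 1) at_top"
    by (rule filterlim_compose[OF lim])
qed simp

end

lemma tendsto_divide_one_plus_at_top: "((\<lambda>g::real. g / (1 + g)) \<longlongrightarrow> 1) at_top"
proof -
  have "((\<lambda>g::real. inverse (1 + g)) \<longlongrightarrow> 0) at_top"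
    by (intro tendsto_inverse_0_at_top filterlim_tendsto_add_at_top[OF tendsto_const filterlim_ident])
  then have "((\<lambda>g::real. 1 - inverse (1 + g)) \<longlongrightarrow> 1 - 0) at_top"
    by (intro tendsto_diff tendsto_const)
  moreover have "eventually (\<lambda>g::real. 1 - inverse (1 + g) = g / (1 + g)) at_top"
    unfolding eventually_at_top_linorder by (intro exI[of _ 0]) (auto simp: field_simps)
  ultimately show ?thesis
    by (simp add: tendsto_cong)
qed

lemma exists_continuous_minorant:
  fixes h :: "real \<Rightarrow> real"
  assumes "\<And>t. 0 \<le> h t" "\<And>t. h t \<le> 1" "mono h" "(h \<longlongrightarrow> 1) at_top"
  obtains \<phi> where "\<forall>g\<ge>0. 0 \<le> \<phi> g \<and> \<phi> g < 1" "continuous_on {0..} \<phi>" "mono_on {0..} \<phi>"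
    "\<phi> 0 = 0" "(\<phi> \<longlongrightarrow> 1) at_top" "\<And>g. 0 \<le> g \<Longrightarrow> \<phi> g \<le> h g"
proof -
  define \<psi> where "\<psi> = lipschitz_envelope h"
  have \<psi>: "continuous_on UNIV \<psi>" "mono \<psi>" "\<And>g. 0 \<le> \<psi> g" "\<And>g. \<psi> g \<le> h g"
      "(\<psi> \<longlongrightarrow> 1) at_top"
    unfolding \<psi>_def using assms
    by (auto intro: lipschitz_on_continuous_on lipschitz_lipschitz_envelope mono_lipschitz_envelope
        lipschitz_envelope_nonneg lipschitz_envelope_le_self tendsto_lipschitz_envelope)
  have \<psi>1: "\<psi> g \<le> 1" for g
    using \<psi>(4) assms(2) order_trans by blast
  \<comment> \<open>The factor \<open>g / (1 + g)\<close> makes the minorant vanish at \<open>0\<close> and stay below \<open>1\<close>.\<close>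
  define \<phi> where "\<phi> g = \<psi> g * (g / (1 + g))" for g
  have q: "0 \<le> g / (1 + g)" "g / (1 + g) < 1" if "0 \<le> g" for g :: real
    using that by auto
  show ?thesis
  proof (rule that)
    show "\<forall>g\<ge>0. 0 \<le> \<phi> g \<and> \<phi> g < 1"
    proof (intro allI impI conjI)
      fix g :: real
      assume g: "0 \<le> g"
      show "0 \<le> \<phi> g"
        unfolding \<phi>_def using \<psi>(3)[of g] q(1)[OF g] by (rule mult_nonneg_nonneg)
      have "\<phi> g \<le> g / (1 + g)"
        unfolding \<phi>_def using \<psi>(3)[of g] \<psi>1[of g] q[OF g] by (intro mult_left_le_one_le) auto
      then show "\<phi> g < 1"
        using q(2)[OF g] by linarith
    qed
    have "continuous_on {0..} (\<lambda>g::real. g / (1 + g))"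
      by (intro continuous_intros) auto
    then show "continuous_on {0..} \<phi>"
      unfolding \<phi>_def using continuous_on_subset[OF \<psi>(1), of "{0..}"] by (intro continuous_on_mult) auto
    show "mono_on {0..} \<phi>"
    proof (rule mono_onI)
      fix g g' :: real
      assume "g \<in> {0..}" "g' \<in> {0..}" "g \<le> g'"
      moreover have "g / (1 + g) \<le> g' / (1 + g')"
        using calculation by (simp add: field_simps)
      ultimately show "\<phi> g \<le> \<phi> g'"
        unfolding \<phi>_def using \<psi>(3) q by (intro mult_mono monoD[OF \<psi>(2)]) auto
    qed
    show "\<phi> 0 = 0"
      by (simp add: \<phi>_def)
    from tendsto_mult[OF \<psi>(5) tendsto_divide_one_plus_at_top] show "(\<phi> \<longlongrightarrow> 1) at_top"
      by (simp add: \<phi>_def[abs_def])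
    show "\<phi> g \<le> h g" if "0 \<le> g" for g
    proof -
      have "\<phi> g \<le> \<psi> g"
        unfolding \<phi>_def using \<psi>(3)[of g] q[OF that] by (intro mult_right_le_one_le) auto
      then show ?thesis
        using \<psi>(4)[of g] by linarith
    qed
  qed
qed

section \<open>The coefficient \<open>c\<^sub>0\<close>\<close>

lemma Re_cj_integrand_0: "Re (cj_integrand 0 z b x) = (1 + Re z) / ((1 + Re z)\<^sup>2 + (Im z + b * x)\<^sup>2)"
  by (simp add: cj_integrand_def Re_divide power2_eq_square)

lemma Re_cj_integrand_0_bounds:
  assumes "0 \<le> Re z"
  shows "0 \<le> Re (cj_integrand 0 z b x)" "Re (cj_integrand 0 z b x) \<le> 1"
proof -
  have "1 + Re z \<le> (1 + Re z)\<^sup>2 + (Im z + b * x)\<^sup>2"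
    using assms by (simp add: power2_eq_square add_increasing2)
  then show "0 \<le> Re (cj_integrand 0 z b x)" "Re (cj_integrand 0 z b x) \<le> 1"
    using assms by (simp_all add: Re_cj_integrand_0 divide_le_eq_1)
qed

lemma Re_cj_integrand_0_le:
  assumes z: "0 \<le> Re z" and b: "0 < b" and \<delta>: "0 < \<delta>"
  shows "Re (cj_integrand 0 z b x) \<le> indicator {- Im z / b - \<delta><..<- Im z / b + \<delta>} x + 1 / (2 * b * \<delta>)"
proof (cases "\<bar>Im z + b * x\<bar> < b * \<delta>")
  case True
  then have "x \<in> {- Im z / b - \<delta><..<- Im z / b + \<delta>}"
    using b by (auto simp: field_simps abs_less_iff)
  then have "indicator {- Im z / b - \<delta><..<- Im z / b + \<delta>} x = (1::real)"
    by simp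
  moreover have "0 \<le> 1 / (2 * b * \<delta>)"
    using b \<delta> by simp
  ultimately show ?thesis
    using Re_cj_integrand_0_bounds(2)[OF z, of b x] by linarith
next
  case False
  define a where "a = 1 + Re z"
  define y where "y = Im z + b * x"
  have a: "1 \<le> a" and y: "b * \<delta> \<le> \<bar>y\<bar>"
    using z False by (simp_all add: a_def y_def)
  have le: "2 * a * \<bar>y\<bar> \<le> a\<^sup>2 + y\<^sup>2"
    using sum_squares_bound[of a "\<bar>y\<bar>"] by simp
  have "0 < \<bar>y\<bar>"
    using y mult_pos_pos[OF b \<delta>] by linarith
  then have pos: "0 < 2 * a * \<bar>y\<bar>"
    using a by simp
  have "a / (a\<^sup>2 + y\<^sup>2) \<le> a / (2 * a * \<bar>y\<bar>)"
    using a le pos by (intro divide_left_mono mult_pos_pos) auto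
  also have "\<dots> = 1 / (2 * \<bar>y\<bar>)"
    using a by simp
  also have "\<dots> \<le> 1 / (2 * b * \<delta>)"
  proof (rule divide_left_mono)
    show "0 < 2 * \<bar>y\<bar> * (2 * b * \<delta>)"
      using \<open>0 < \<bar>y\<bar>\<close> b \<delta> by simp
  qed (use y in auto)
  finally show ?thesis
    by (simp add: Re_cj_integrand_0 a_def y_def indicator_def)
qed

lemma Re_integral_cj_integrand_0_le:
  assumes z: "0 \<le> Re z" and b: "0 < b" and \<delta>: "0 < \<delta>"
  shows "Re (integral\<^sup>L (coordinate_law i) (cj_integrand 0 z b))
    \<le> measure (coordinate_law i) {- Im z / b - \<delta><..<- Im z / b + \<delta>} + 1 / (2 * b * \<delta>)"
proof -
  let ?S = "{- Im z / b - \<delta><..<- Im z / b + \<delta>}"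
  have "Re (integral\<^sup>L (coordinate_law i) (cj_integrand 0 z b))
      = integral\<^sup>L (coordinate_law i) (\<lambda>x. Re (cj_integrand 0 z b x))"
    by (rule integral_Re[symmetric]) (rule integrable_cj_integrand[OF z])
  also have "\<dots> \<le> integral\<^sup>L (coordinate_law i) (\<lambda>x. indicator ?S x + 1 / (2 * b * \<delta>))"
  proof (rule integral_mono)
    show "integrable (coordinate_law i) (\<lambda>x. indicator ?S x + 1 / (2 * b * \<delta>))"
      by (rule integrable_coordinate_law[where C="1 + 1 / (2 * b * \<delta>)"]) (use b \<delta> in \<open>auto simp: indicator_def\<close>)
  qed (use integrable_cj_integrand[OF z] Re_cj_integrand_0_le[OF z b \<delta>] in auto)
  also have "\<dots> = measure (coordinate_law i) ?S + 1 / (2 * b * \<delta>)"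
    by (simp add: integrable_coordinate_law[where C=1])
  finally show ?thesis .
qed

lemma Re_integral_cj_integrand_0_bounds:
  assumes z: "0 \<le> Re z"
  shows "0 \<le> Re (integral\<^sup>L (coordinate_law i) (cj_integrand 0 z b))"
    "Re (integral\<^sup>L (coordinate_law i) (cj_integrand 0 z b)) \<le> 1"
proof -
  have eq: "Re (integral\<^sup>L (coordinate_law i) (cj_integrand 0 z b))
      = integral\<^sup>L (coordinate_law i) (\<lambda>x. Re (cj_integrand 0 z b x))"
    by (rule integral_Re[symmetric]) (rule integrable_cj_integrand[OF z])
  have int: "integrable (coordinate_law i) (\<lambda>x. Re (cj_integrand 0 z b x))"
    using integrable_cj_integrand[OF z, of i 0 b] by simp
  show "0 \<le> Re (integral\<^sup>L (coordinate_law i) (cj_integrand 0 z b))"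
    unfolding eq using Re_cj_integrand_0_bounds(1)[OF z] by (simp add: integral_nonneg)
  have "integral\<^sup>L (coordinate_law i) (\<lambda>x. Re (cj_integrand 0 z b x)) \<le> integral\<^sup>L (coordinate_law i) (\<lambda>_. 1)"
    using int Re_cj_integrand_0_bounds(2)[OF z] by (intro integral_mono) auto
  then show "Re (integral\<^sup>L (coordinate_law i) (cj_integrand 0 z b)) \<le> 1"
    unfolding eq by simp
qed

definition sup_Re_c0 :: "'n::finite \<Rightarrow> real \<Rightarrow> real" where
  "sup_Re_c0 i \<gamma> = (SUP (z, b) \<in> {z. 0 \<le> Re z} \<times> {\<gamma>..}. Re (integral\<^sup>L (coordinate_law i) (cj_integrand 0 z b)))"

lemma
  fixes i :: "'n::finite"
  shows sup_Re_c0_upper: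
    "0 \<le> Re z \<Longrightarrow> \<gamma> \<le> b \<Longrightarrow> Re (integral\<^sup>L (coordinate_law i) (cj_integrand 0 z b)) \<le> sup_Re_c0 i \<gamma>"
    and sup_Re_c0_le:
    "(\<And>z b. 0 \<le> Re z \<Longrightarrow> \<gamma> \<le> b \<Longrightarrow> Re (integral\<^sup>L (coordinate_law i) (cj_integrand 0 z b)) \<le> M)
      \<Longrightarrow> sup_Re_c0 i \<gamma> \<le> M"
    and sup_Re_c0_antimono: "\<gamma> \<le> \<gamma>' \<Longrightarrow> sup_Re_c0 i \<gamma>' \<le> sup_Re_c0 i \<gamma>"
proof -
  let ?f = "\<lambda>(z, b). Re (integral\<^sup>L (coordinate_law i) (cj_integrand 0 z b))"
  have bdd: "bdd_above (?f ` A)" if "A \<subseteq> {z. 0 \<le> Re z} \<times> UNIV" for A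
    using that Re_integral_cj_integrand_0_bounds(2) by (intro bdd_aboveI2[where M=1]) auto
  have ne: "{z. 0 \<le> Re z} \<times> {\<gamma>..} \<noteq> {}" for \<gamma> :: real
  proof -
    have "(0, \<gamma>) \<in> {z. 0 \<le> Re z} \<times> {\<gamma>..}"
      by simp
    then show ?thesis
      by blast
  qed
  show "Re (integral\<^sup>L (coordinate_law i) (cj_integrand 0 z b)) \<le> sup_Re_c0 i \<gamma>"
    if "0 \<le> Re z" "\<gamma> \<le> b"
  proof -
    have "?f (z, b) \<le> (SUP x\<in>{z. 0 \<le> Re z} \<times> {\<gamma>..}. ?f x)"
      using that by (intro cSUP_upper bdd) auto
    then show ?thesis
      by (simp add: sup_Re_c0_def)
  qed
  show "(\<And>z b. 0 \<le> Re z \<Longrightarrow> \<gamma> \<le> b \<Longrightarrow> Re (integral\<^sup>L (coordinate_law i) (cj_integrand 0 z b)) \<le> M)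
      \<Longrightarrow> sup_Re_c0 i \<gamma> \<le> M"
    unfolding sup_Re_c0_def by (rule cSUP_least[OF ne]) auto
  show "\<gamma> \<le> \<gamma>' \<Longrightarrow> sup_Re_c0 i \<gamma>' \<le> sup_Re_c0 i \<gamma>"
    unfolding sup_Re_c0_def by (rule cSUP_subset_mono[OF ne bdd]) auto
qed

lemma sup_Re_c0_bounds: "0 \<le> sup_Re_c0 i \<gamma>" "sup_Re_c0 i \<gamma> \<le> 1"
  using sup_Re_c0_upper[of 0 \<gamma> \<gamma> i] Re_integral_cj_integrand_0_bounds[of 0 i \<gamma>]
  by (auto intro: sup_Re_c0_le Re_integral_cj_integrand_0_bounds(2))

lemma sup_Re_c0_le_interval_measure:
  assumes \<gamma>: "0 < \<gamma>" and \<delta>: "0 < \<delta>"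
    and interval: "\<And>t. measure (coordinate_law i) {t - \<delta><..<t + \<delta>} \<le> \<eta>"
  shows "sup_Re_c0 i \<gamma> \<le> \<eta> + 1 / (2 * \<gamma> * \<delta>)"
proof (rule sup_Re_c0_le)
  fix z b
  assume z: "0 \<le> Re z" and b: "\<gamma> \<le> b"
  then have "0 < b"
    using \<gamma> by linarith
  then have "1 / (2 * b * \<delta>) \<le> 1 / (2 * \<gamma> * \<delta>)"
    using \<gamma> \<delta> b by (intro divide_left_mono mult_right_mono mult_pos_pos) auto
  then show "Re (integral\<^sup>L (coordinate_law i) (cj_integrand 0 z b)) \<le> \<eta> + 1 / (2 * \<gamma> * \<delta>)"
    using Re_integral_cj_integrand_0_le[OF z \<open>0 < b\<close> \<delta>, of i] interval[of "- Im z / b"] by linarith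
qed

lemma sup_Re_c0_tendsto_0:
  fixes i :: "'n::finite"
  assumes card: "CARD('n) \<ge> 2"
  shows "(sup_Re_c0 i \<longlongrightarrow> 0) at_top"
proof (rule order_tendstoI)
  show "eventually (\<lambda>\<gamma>. a < sup_Re_c0 i \<gamma>) at_top" if "a < 0" for a
    using that sup_Re_c0_bounds(1)[of i] by (intro always_eventually allI) (rule order_less_le_trans)
  fix a :: real
  assume a: "0 < a"
  obtain \<delta> where \<delta>: "0 < \<delta>" and interval: "\<And>t. measure (coordinate_law i) {t - \<delta><..<t + \<delta>} \<le> a / 4"
    using coordinate_law_intervals_uniformly_small[OF card, of "a / 4" i] a by auto
  have "sup_Re_c0 i \<gamma> < a" if \<gamma>: "1 / (a * \<delta>) \<le> \<gamma>" for \<gamma>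
  proof -
    have "0 < 1 / (a * \<delta>)"
      using a \<delta> by simp
    then have "0 < \<gamma>"
      using \<gamma> by linarith
    have "1 \<le> \<gamma> * (a * \<delta>)"
      using \<gamma> a \<delta> by (simp add: pos_divide_le_eq)
    then have "1 / (2 * \<gamma> * \<delta>) \<le> a / 2"
      using a \<delta> \<open>0 < \<gamma>\<close> by (simp add: field_simps)
    then show ?thesis
      using sup_Re_c0_le_interval_measure[OF \<open>0 < \<gamma>\<close> \<delta> interval] a by linarith
  qed
  then show "eventually (\<lambda>\<gamma>. sup_Re_c0 i \<gamma> < a) at_top"
    unfolding eventually_at_top_linorder by blast
qed

lemma Re_cj_0_uniform_bound:
  fixes i :: "'n::finite"
  assumes "CARD('n) \<ge> 2"
  obtains \<phi> where "\<forall>g\<ge>0. 0 \<le> \<phi> g \<and> \<phi> g < 1" "continuous_on {0..} \<phi>" "mono_on {0..} \<phi>"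
    "\<phi> 0 = 0" "(\<phi> \<longlongrightarrow> 1) at_top"
    "\<And>\<gamma> z k. 0 \<le> Re z \<Longrightarrow> 0 \<le> \<gamma> \<Longrightarrow> \<gamma> \<le> norm k \<Longrightarrow> Re (cj i 0 z k) \<le> 1 - \<phi> \<gamma>"
proof -
  define h where "h \<gamma> = 1 - sup_Re_c0 i \<gamma>" for \<gamma>
  obtain \<phi> where \<phi>: "\<forall>g\<ge>0. 0 \<le> \<phi> g \<and> \<phi> g < 1" "continuous_on {0..} \<phi>" "mono_on {0..} \<phi>"
      "\<phi> 0 = 0" "(\<phi> \<longlongrightarrow> 1) at_top" "\<And>g. 0 \<le> g \<Longrightarrow> \<phi> g \<le> h g"
  proof (rule exists_continuous_minorant)
    show "mono h"
      by (intro monoI) (simp add: h_def sup_Re_c0_antimono)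
    show "(h \<longlongrightarrow> 1) at_top"
      unfolding h_def using tendsto_diff[OF tendsto_const sup_Re_c0_tendsto_0[OF assms]] by simp
  qed (use sup_Re_c0_bounds in \<open>auto simp: h_def\<close>)
  have "Re (cj i 0 z k) \<le> 1 - \<phi> \<gamma>" if "0 \<le> Re z" "0 \<le> \<gamma>" "\<gamma> \<le> norm k" for \<gamma> z k
    using sup_Re_c0_upper[OF that(1,3), of i] \<phi>(6)[OF that(2)] unfolding cj_eq_integral h_def by linarith
  then show ?thesis
    by (rule that[OF \<phi>(1-5)])
qed

theorem lemma3:
  fixes i1 :: "'n::finite"
  assumes "CARD('n) \<ge> 2"
  shows "(\<exists>\<phi>0 :: real \<Rightarrow> real.
      (\<forall>g\<ge>0. 0 \<le> \<phi>0 g \<and> \<phi>0 g < 1) \<and>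
      continuous_on {0..} \<phi>0 \<and> mono_on {0..} \<phi>0 \<and> \<phi>0 0 = 0 \<and>
      (\<phi>0 \<longlongrightarrow> 1) at_top \<and>
      (\<forall>\<gamma>>0. \<forall>z::complex. \<forall>k::real^'n.
         Re z \<ge> 0 \<longrightarrow> k \<in> scaled_lattice \<gamma> \<longrightarrow> k \<noteq> 0 \<longrightarrow>
           Re (cj i1 0 z k) \<le> 1 - \<phi>0 \<gamma> \<and>
           norm (cj i1 1 z k) \<le> 1 / (2 * sqrt (real CARD('n))) + 1 / \<gamma> \<and>
           (\<forall>\<epsilon>. 0 < \<epsilon> \<and> \<epsilon> < 1 \<longrightarrow>
              real CARD('n) * norm (cj i1 2 z k) \<le> 1 - alpha2 i1 \<epsilon> * phi2 (\<epsilon> * \<gamma>)))) \<and>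
    continuous_on {0..1} (alpha2 i1) \<and>
    strict_antimono_on {0..1} (alpha2 i1) \<and>
    alpha2 i1 0 = 1/2 \<and> alpha2 i1 1 = 0"
proof -
  obtain \<phi> where \<phi>: "\<forall>g\<ge>0. 0 \<le> \<phi> g \<and> \<phi> g < 1" "continuous_on {0..} \<phi>" "mono_on {0..} \<phi>"
      "\<phi> 0 = 0" "(\<phi> \<longlongrightarrow> 1) at_top"
    and Re_cj_0: "\<And>\<gamma> z k. 0 \<le> Re z \<Longrightarrow> 0 \<le> \<gamma> \<Longrightarrow> \<gamma> \<le> norm k \<Longrightarrow> Re (cj i1 0 z k) \<le> 1 - \<phi> \<gamma>"
    using Re_cj_0_uniform_bound[OF assms, where i=i1] by blast
  show ?thesis
  proof (intro conjI exI[of _ \<phi>] allI impI)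
    fix \<gamma> z and k :: "real^'n"
    assume \<gamma>: "0 < \<gamma>" and z: "0 \<le> Re z" and "k \<in> scaled_lattice \<gamma>" "k \<noteq> 0"
    then have b: "\<gamma> \<le> norm k"
      by (intro scaled_lattice_norm_ge)
    show "Re (cj i1 0 z k) \<le> 1 - \<phi> \<gamma>"
      using Re_cj_0[OF z _ b] \<gamma> by simp
    show "norm (cj i1 1 z k) \<le> 1 / (2 * sqrt (real CARD('n))) + 1 / \<gamma>"
      by (rule norm_cj_1_le[OF z \<gamma> b])
    show "real CARD('n) * norm (cj i1 2 z k) \<le> 1 - alpha2 i1 \<epsilon> * phi2 (\<epsilon> * \<gamma>)"
      if "0 < \<epsilon> \<and> \<epsilon> < 1" for \<epsilon>
      using that by (intro norm_cj_2_le[OF z \<gamma> b]) simp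
  next
    show "continuous_on {0..1} (alpha2 i1)"
      by (intro continuous_at_imp_continuous_on ballI continuous_alpha2[OF assms])
    show "strict_antimono_on {0..1} (alpha2 i1)"
      by (intro monotone_onI alpha2_strict_decreasing[OF assms]) auto
  qed (use \<phi> in \<open>simp_all add: alpha2_0 alpha2_1[OF assms]\<close>)
qed

end
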